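(* Let $G$ be a graph on $n$ vertices of tree-width $w$, and suppose that its complement $\overline{G}$ is closed under the Bondy–Chvátal closure, i.e. for every two distinct vertices $u,v$ that are non-adjacent in $\overline{G}$ we have $\deg_{\overline{G}}(u)+\deg_{\overline{G}}(v)<n$. Then the neighborhood diversity of $\overline{G}$ is at most $2^{k}+k$, where $k=2(w^2+w)$.
   Context: All graphs are finite and simple. The complement $\overline{G}$ of a graph $G=(V,E)$ is the graph $(V,\binom{V}{2}\setminus E)$. Tree-width: a tree decomposition of $G$ is a pair $(T,\{X_i\}_{i\in I})$ with $T=(I,F)$ a tree and bags $X_i\subseteq V(G)$ such that every vertex lies in some bag, every edge has both endpoints in some bag, and for each vertex $v$ the nodes whose bags contain $v$ induce a subtree of $T$; its width is $\max_i|X_i|-1$, and the tree-width of $G$ is the minimum width over all tree decompositions. The neighborhood diversity of a graph $H$ is the minimum size of a partition of $V(H)$ into classes such that any two vertices $v,v'$ in the same class satisfy $N(v)\setminus\{v'\}=N(v')\setminus\{v\}$. *)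

theory Defs
  imports Main
begin

definition simple_graph :: "'a set \<Rightarrow> 'a set set \<Rightarrow> bool" where
  "simple_graph V E \<longleftrightarrow> finite V \<and> (\<forall>e\<in>E. e \<subseteq> V \<and> card e = 2)"

definition complement_edges :: "'a set \<Rightarrow> 'a set set \<Rightarrow> 'a set set" where
  "complement_edges V E = {{u, v} | u v. u \<in> V \<and> v \<in> V \<and> u \<noteq> v} - E"

definition degree :: "'a set set \<Rightarrow> 'a \<Rightarrow> nat" where
  "degree E v = card {e \<in> E. v \<in> e}"

definition neighbors :: "'a set set \<Rightarrow> 'a \<Rightarrow> 'a set" where
  "neighbors E v = {u. {u, v} \<in> E \<and> u \<noteq> v}"

definition is_walk :: "'a set \<Rightarrow> 'a set set \<Rightarrow> 'a list \<Rightarrow> bool" where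
  "is_walk V E p \<longleftrightarrow> p \<noteq> [] \<and> set p \<subseteq> V \<and>
     (\<forall>i. Suc i < length p \<longrightarrow> {p ! i, p ! Suc i} \<in> E)"

definition connected_graph :: "'a set \<Rightarrow> 'a set set \<Rightarrow> bool" where
  "connected_graph V E \<longleftrightarrow> (\<forall>u\<in>V. \<forall>v\<in>V. \<exists>p. is_walk V E p \<and> hd p = u \<and> last p = v)"

definition induced_edges :: "'a set set \<Rightarrow> 'a set \<Rightarrow> 'a set set" where
  "induced_edges E S = {e \<in> E. e \<subseteq> S}"

definition is_tree :: "'b set \<Rightarrow> 'b set set \<Rightarrow> bool" where
  "is_tree I F \<longleftrightarrow> simple_graph I F \<and> I \<noteq> {} \<and> connected_graph I F \<and> card F + 1 = card I"

definition tree_decomposition ::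
  "'a set \<Rightarrow> 'a set set \<Rightarrow> 'b set \<Rightarrow> 'b set set \<Rightarrow> ('b \<Rightarrow> 'a set) \<Rightarrow> bool" where
  "tree_decomposition V E I F X \<longleftrightarrow>
     is_tree I F \<and> (\<forall>i\<in>I. X i \<subseteq> V) \<and>
     (\<forall>v\<in>V. \<exists>i\<in>I. v \<in> X i) \<and>
     (\<forall>e\<in>E. \<exists>i\<in>I. e \<subseteq> X i) \<and>
     (\<forall>v\<in>V. connected_graph {i\<in>I. v \<in> X i} (induced_edges F {i\<in>I. v \<in> X i}))"

definition td_width :: "'b set \<Rightarrow> ('b \<Rightarrow> 'a set) \<Rightarrow> nat" where
  "td_width I X = Max ((\<lambda>i. card (X i)) ` I) - 1"

(* tree-width; tree index nodes drawn from nat (any finite tree is isomorphic to one on nat) *)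
definition treewidth :: "'a set \<Rightarrow> 'a set set \<Rightarrow> nat" where
  "treewidth V E = (LEAST w. \<exists>(I::nat set) F X. tree_decomposition V E I F X \<and> td_width I X = w)"

definition nd_partition :: "'a set \<Rightarrow> 'a set set \<Rightarrow> 'a set set \<Rightarrow> bool" where
  "nd_partition V E P \<longleftrightarrow> (\<forall>C\<in>P. C \<noteq> {}) \<and> \<Union>P = V \<and>
     (\<forall>C\<in>P. \<forall>D\<in>P. C \<noteq> D \<longrightarrow> C \<inter> D = {}) \<and>
     (\<forall>C\<in>P. \<forall>v\<in>C. \<forall>v'\<in>C. neighbors E v - {v'} = neighbors E v' - {v})"

definition neighborhood_diversity :: "'a set \<Rightarrow> 'a set set \<Rightarrow> nat" where
  "neighborhood_diversity V E = (LEAST k. \<exists>P. nd_partition V E P \<and> card P = k)"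

end

theory Submission
  imports Defs
begin

text \<open>
  A graph of tree-width \<open>w\<close> on \<open>n\<close> vertices has at most \<open>w n\<close> edges (peel off a leaf bag:
  the vertices private to it have all their edges inside that bag).
  If \<open>u v\<close> is an edge of \<open>G\<close>, the closure condition gives \<open>deg\<^sub>H u + deg\<^sub>H v < n\<close> for
  \<open>H = \<overline>G\<close>, so the set \<open>S\<close> of vertices with \<open>2 deg\<^sub>H < n\<close> covers all edges of \<open>G\<close>, and every
  vertex of \<open>S\<close> has \<open>G\<close>-degree at least about \<open>n/2\<close>. Double counting then gives \<open>|S| \<le> 4w\<close>
  once \<open>n\<close> is large. Vertices outside \<open>S\<close> with the same \<open>G\<close>-neighbourhood (a subset of \<open>S\<close>)
  are twins in \<open>H\<close>, so the singletons of \<open>S\<close> together with at most \<open>2\<^bsup>|S|\<^esup>\<close> such classes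
  form a neighbourhood-diversity partition of \<open>H\<close>. For small \<open>n\<close> the trivial bound
  \<open>n\<close> suffices.
\<close>

lemma sum_degree_eq_twice_card_edges:
  assumes "finite A" "finite F" "\<forall>e\<in>F. e \<subseteq> A \<and> card e = 2"
  shows "(\<Sum>i\<in>A. degree F i) = 2 * card F"
proof -
  have "(\<Sum>i\<in>A. degree F i) = (\<Sum>i\<in>A. \<Sum>e\<in>F. (of_bool (i\<in>e)::nat))"
    using assms(2) unfolding degree_def by (intro sum.cong) (auto simp: Int_def)
  also have "\<dots> = (\<Sum>e\<in>F. \<Sum>i\<in>A. (of_bool (i\<in>e)::nat))" by (rule sum.swap)
  also have "\<dots> = (\<Sum>e\<in>F. 2)"
  proof (intro sum.cong refl)
    fix e assume "e \<in> F"
    then have "A \<inter> {i. i \<in> e} = e" using assms(3) by auto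
    then show "(\<Sum>i\<in>A. (of_bool (i\<in>e)::nat)) = 2" using assms(1,3) \<open>e\<in>F\<close> by simp
  qed
  finally show ?thesis by simp
qed

lemma simple_graph_finite_edges: "simple_graph V E \<Longrightarrow> finite E"
  unfolding simple_graph_def by (metis Pow_iff finite_Pow_iff finite_subset subsetI)

lemma doubleton_in_complement_edges_iff:
  assumes "u \<in> V"
  shows "{x, u} \<in> complement_edges V E \<longleftrightarrow> x \<in> V \<and> x \<noteq> u \<and> {x, u} \<notin> E"
  using assms unfolding complement_edges_def by (auto simp: doubleton_eq_iff)

lemma neighbors_complement_edges:
  assumes "u \<in> V"
  shows "neighbors (complement_edges V E) u = {x\<in>V. x \<noteq> u \<and> x \<notin> neighbors E u}"
  using doubleton_in_complement_edges_iff[OF assms, of _ E] unfolding neighbors_def by auto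

lemma degree_add_degree_complement_ge:
  assumes "simple_graph V E" "v \<in> V"
  shows "card V - 1 \<le> degree E v + degree (complement_edges V E) v"
proof -
  have finV: "finite V" using assms(1) by (simp add: simple_graph_def)
  have finH: "finite (complement_edges V E)"
    using finV unfolding complement_edges_def by (auto intro: finite_subset[of _ "Pow V"])
  have sub: "(\<lambda>x. {x, v}) ` (V - {v}) \<subseteq> {e\<in>E. v\<in>e} \<union> {e\<in>complement_edges V E. v\<in>e}"
    using doubleton_in_complement_edges_iff[OF assms(2), of _ E] by auto
  have "inj_on (\<lambda>x. {x, v}) (V - {v})" by (auto simp: inj_on_def doubleton_eq_iff)
  then have "card V - 1 = card ((\<lambda>x. {x, v}) ` (V - {v}))"
    using card_image assms(2) finV by fastforce
  also have "\<dots> \<le> card ({e\<in>E. v\<in>e} \<union> {e\<in>complement_edges V E. v\<in>e})"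
    using simple_graph_finite_edges[OF assms(1)] finH sub by (intro card_mono) auto
  also have "\<dots> \<le> degree E v + degree (complement_edges V E) v"
    unfolding degree_def by (rule card_Un_le)
  finally show ?thesis .
qed

lemma is_walk_Cons:
  "is_walk A F (a # r) \<longleftrightarrow> a \<in> A \<and> (r = [] \<or> ({a, hd r} \<in> F \<and> is_walk A F r))"
proof (cases r)
  case Nil
  then show ?thesis by (auto simp: is_walk_def)
next
  case (Cons b r')
  have "(\<forall>i. Suc i < length (a # r) \<longrightarrow> {(a # r) ! i, (a # r) ! Suc i} \<in> F) \<longleftrightarrow>
        {a, b} \<in> F \<and> (\<forall>i. Suc i < length r \<longrightarrow> {r ! i, r ! Suc i} \<in> F)"
    (is "?L \<longleftrightarrow> ?R")
  proof
    assume ?L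
    then show ?R using Cons by (metis Suc_less_eq length_Cons nth_Cons_0 nth_Cons_Suc zero_less_Suc)
  next
    assume ?R
    show ?L
    proof (intro allI impI)
      fix i assume "Suc i < length (a # r)"
      then show "{(a # r) ! i, (a # r) ! Suc i} \<in> F" using \<open>?R\<close> Cons by (cases i) auto
    qed
  qed
  then show ?thesis using Cons by (auto simp: is_walk_def)
qed

lemma is_walk_first_edge:
  assumes "is_walk A F p" "hd p \<noteq> last p"
  shows "{hd p, p ! 1} \<in> F"
proof -
  have "p \<noteq> []" using assms(1) by (auto simp: is_walk_def)
  with assms(2) have "Suc 0 < length p" by (cases p) auto
  then show ?thesis using assms(1) \<open>p \<noteq> []\<close> unfolding is_walk_def by (auto simp: hd_conv_nth)
qed

text \<open>A walk between vertices other than \<open>l\<close> that enters \<open>l\<close> must do so from its unique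
  neighbour \<open>q\<close> and return there, so the detour \<open>q l q\<close> can be cut out.\<close>

lemma is_walk_avoiding_pendant:
  assumes "is_walk A F p" "hd p \<noteq> l" "last p \<noteq> l" "\<forall>x. {x, l} \<in> F \<longrightarrow> x = q"
  shows "\<exists>r. is_walk (A - {l}) {e\<in>F. l \<notin> e} r \<and> hd r = hd p \<and> last r = last p"
  using assms(1-3)
proof (induction "length p" arbitrary: p rule: less_induct)
  case less
  obtain a rest where p: "p = a # rest" using less.prems(1) by (cases p) (auto simp: is_walk_def)
  show ?case
  proof (cases rest)
    case Nil
    then show ?thesis using less.prems p by (intro exI[of _ "[a]"]) (auto simp: is_walk_def)
  next
    case (Cons b rest')
    have w: "a \<in> A" "{a, b} \<in> F" "is_walk A F rest"
      using less.prems(1) p Cons by (auto simp: is_walk_Cons)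
    have "a \<noteq> l" using less.prems(2) p by simp
    show ?thesis
    proof (cases "b = l")
      case False
      obtain r where r: "is_walk (A - {l}) {e\<in>F. l \<notin> e} r" "hd r = b" "last r = last rest"
        using less.hyps[of rest] less.prems(3) w(3) p Cons False by auto
      have "r \<noteq> []" using r(1) by (auto simp: is_walk_def)
      then show ?thesis using r w \<open>a \<noteq> l\<close> False p Cons
        by (intro exI[of _ "a # r"]) (auto simp: is_walk_Cons)
    next
      case True
      then have "a = q" using assms(4) w(2) by (auto simp: insert_commute)
      obtain c rest'' where rc: "rest' = c # rest''"
        using less.prems(3) p Cons True by (cases rest') auto
      have "{l, c} \<in> F" "is_walk A F rest'" using w(3) Cons rc True by (auto simp: is_walk_Cons)
      then have "c = q" using assms(4) by (auto simp: insert_commute)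
      obtain r where "is_walk (A - {l}) {e\<in>F. l \<notin> e} r" "hd r = c" "last r = last rest'"
        using less.hyps[of rest'] \<open>is_walk A F rest'\<close> less.prems(3) p Cons rc \<open>c = q\<close> \<open>a = q\<close> \<open>a \<noteq> l\<close>
        by auto
      then show ?thesis using p Cons rc \<open>a = q\<close> \<open>c = q\<close> by auto
    qed
  qed
qed

lemma connected_graph_remove_pendant:
  assumes "connected_graph A F" "\<forall>x. {x, l} \<in> F \<longrightarrow> x = q"
  shows "connected_graph (A - {l}) {e\<in>F. l \<notin> e}"
  unfolding connected_graph_def
proof (intro ballI)
  fix u v assume "u \<in> A - {l}" "v \<in> A - {l}"
  moreover obtain p where "is_walk A F p" "hd p = u" "last p = v"
    using assms(1) calculation unfolding connected_graph_def by blast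
  ultimately show "\<exists>r. is_walk (A - {l}) {e\<in>F. l \<notin> e} r \<and> hd r = u \<and> last r = v"
    using is_walk_avoiding_pendant[OF _ _ _ assms(2)] by auto
qed

subsection \<open>Trees and leaves\<close>

lemma card_2_obtain_other:
  assumes "card e = 2" "l \<in> e"
  obtains x where "x \<noteq> l" "e = {l, x}"
proof -
  obtain a b where ab: "e = {a, b}" "a \<noteq> b" using assms(1) by (auto simp: card_2_iff)
  show thesis
  proof (cases "l = a")
    case True
    then show ?thesis using that[of b] ab by auto
  next
    case False
    then have "l = b" using ab assms(2) by auto
    then show ?thesis using that[of a] ab by (auto simp: insert_commute)
  qed
qed

lemma tree_has_leaf:
  assumes "is_tree I F" "2 \<le> card I"
  obtains l p where "l \<in> I" "{l, p} \<in> F" "p \<noteq> l" "\<forall>x. {x, l} \<in> F \<longrightarrow> x = p"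
proof -
  have finI: "finite I" and Fsub: "\<forall>e\<in>F. e \<subseteq> I \<and> card e = 2"
    and conn: "connected_graph I F" and cardF: "card F + 1 = card I"
    using assms(1) by (auto simp: is_tree_def simple_graph_def)
  have finF: "finite F" using assms(1) simple_graph_finite_edges unfolding is_tree_def by blast
  have pos: "1 \<le> degree F i" if "i \<in> I" for i
  proof -
    have "\<not> I \<subseteq> {i}"
    proof
      assume "I \<subseteq> {i}"
      then have "card I \<le> 1" using card_mono[of "{i}" I] by simp
      then show False using assms(2) by simp
    qed
    then obtain j where "j \<in> I" "j \<noteq> i" by blast
    moreover have "\<exists>p. is_walk I F p \<and> hd p = i \<and> last p = j"
      using conn that \<open>j \<in> I\<close> unfolding connected_graph_def by simp
    ultimately obtain p where walk: "is_walk I F p" "hd p = i" "last p = j" by blast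
    have "{i, p ! 1} \<in> F" using is_walk_first_edge[OF walk(1)] walk(2,3) \<open>j \<noteq> i\<close> by simp
    then have "{e\<in>F. i \<in> e} \<noteq> {}" by auto
    then show ?thesis using finF unfolding degree_def by (simp add: Suc_le_eq card_gt_0_iff)
  qed
  have "\<exists>l\<in>I. degree F l = 1"
  proof (rule ccontr)
    assume no_leaf: "\<not> ?thesis"
    have "2 \<le> degree F i" if "i \<in> I" for i
    proof -
      have "degree F i \<noteq> 1" using no_leaf that by blast
      then show ?thesis using pos[OF that] by linarith
    qed
    then have "(\<Sum>i\<in>I. 2) \<le> (\<Sum>i\<in>I. degree F i)" by (intro sum_mono)
    then show False using sum_degree_eq_twice_card_edges[OF finI finF Fsub] cardF by simp
  qed
  then obtain l where l: "l \<in> I" "card {e\<in>F. l \<in> e} = 1"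
    unfolding degree_def by blast
  then obtain e where le: "{e\<in>F. l \<in> e} = {e}" by (metis One_nat_def card_1_singleton_iff)
  then have "e \<in> F" "l \<in> e" by auto
  moreover have "card e = 2" using Fsub \<open>e \<in> F\<close> by blast
  ultimately obtain p where p: "p \<noteq> l" "e = {l, p}" by (blast elim: card_2_obtain_other)
  show thesis
  proof (rule that)
    show "l \<in> I" "{l, p} \<in> F" "p \<noteq> l" using l(1) \<open>e \<in> F\<close> p by auto
    show "\<forall>x. {x, l} \<in> F \<longrightarrow> x = p"
    proof (intro allI impI)
      fix x assume "{x, l} \<in> F"
      then have "{x, l} \<in> {e\<in>F. l \<in> e}" by simp
      then have "{x, l} = {l, p}" using le p(2) by simp
      then show "x = p" using p(1) by (auto simp: doubleton_eq_iff)
    qed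
  qed
qed

lemma is_tree_remove_leaf:
  assumes "is_tree I F" "l \<in> I" "{l, p} \<in> F" "\<forall>x. {x, l} \<in> F \<longrightarrow> x = p"
  shows "is_tree (I - {l}) {e\<in>F. l \<notin> e}"
proof -
  have finI: "finite I" and Fsub: "\<forall>e\<in>F. e \<subseteq> I \<and> card e = 2"
    and conn: "connected_graph I F" and cardF: "card F + 1 = card I"
    using assms(1) by (auto simp: is_tree_def simple_graph_def)
  have finF: "finite F" using assms(1) simple_graph_finite_edges unfolding is_tree_def by blast
  have edge_at_l: "e = {l, p}" if e: "e \<in> F" "l \<in> e" for e
  proof -
    have "card e = 2" using Fsub e(1) by blast
    then obtain x where x: "e = {l, x}" using e(2) by (rule card_2_obtain_other)
    then have "{x, l} \<in> F" using \<open>e \<in> F\<close> by (simp add: insert_commute)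
    then have "x = p" using assms(4) by blast
    then show ?thesis using x by simp
  qed
  have "{e\<in>F. l \<notin> e} = F - {{l, p}}"
  proof
    show "{e\<in>F. l \<notin> e} \<subseteq> F - {{l, p}}" by auto
    show "F - {{l, p}} \<subseteq> {e\<in>F. l \<notin> e}" using edge_at_l by blast
  qed
  then have "card {e\<in>F. l \<notin> e} = card F - 1" using finF assms(3) by simp
  moreover have "card (I - {l}) = card I - 1" using finI assms(2) by simp
  moreover have "0 < card F" using finF assms(3) card_gt_0_iff by blast
  ultimately have "card {e\<in>F. l \<notin> e} + 1 = card (I - {l})" using cardF by linarith
  moreover have "p \<in> I" "p \<noteq> l"
    using Fsub assms(3) by auto
  moreover have "connected_graph (I - {l}) {e\<in>F. l \<notin> e}"
    using connected_graph_remove_pendant[OF conn assms(4)] .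
  ultimately show ?thesis
    using Fsub finI unfolding is_tree_def simple_graph_def by blast
qed

subsection \<open>Graphs of bounded tree-width are sparse\<close>

lemma card_edges_meeting_le:
  assumes "finite B" "card B \<le> w + 1" "D \<subseteq> B" "\<forall>e\<in>Es. card e = 2 \<and> e \<subseteq> B \<and> e \<inter> D \<noteq> {}"
  shows "card Es \<le> w * card D"
proof -
  have finD: "finite D" using assms(1,3) finite_subset by blast
  have "Es \<subseteq> (\<Union>d\<in>D. (\<lambda>x. {d, x}) ` (B - {d}))"
  proof
    fix e assume "e \<in> Es"
    then have e: "card e = 2" "e \<subseteq> B" "e \<inter> D \<noteq> {}" using assms(4) by auto
    then obtain d where "d \<in> e" "d \<in> D" by auto
    moreover obtain x where "x \<noteq> d" "e = {d, x}" using e(1) \<open>d \<in> e\<close> by (rule card_2_obtain_other)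
    ultimately show "e \<in> (\<Union>d\<in>D. (\<lambda>x. {d, x}) ` (B - {d}))" using e(2) by auto
  qed
  then have "card Es \<le> card (\<Union>d\<in>D. (\<lambda>x. {d, x}) ` (B - {d}))"
    using finD assms(1) by (intro card_mono) auto
  also have "\<dots> \<le> (\<Sum>d\<in>D. card ((\<lambda>x. {d, x}) ` (B - {d})))" by (rule card_UN_le[OF finD])
  also have "\<dots> \<le> (\<Sum>d\<in>D. w)"
  proof (rule sum_mono)
    fix d assume "d \<in> D"
    have "card ((\<lambda>x. {d, x}) ` (B - {d})) \<le> card (B - {d})" using assms(1) by (intro card_image_le) auto
    also have "\<dots> = card B - 1" using \<open>d \<in> D\<close> assms(3) by (simp add: card_Diff_singleton subsetD)
    finally show "card ((\<lambda>x. {d, x}) ` (B - {d})) \<le> w" using assms(2) by linarith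
  qed
  finally show ?thesis by (simp add: mult.commute)
qed

text \<open>The nodes whose bags contain a vertex are connected, and every path leaving the leaf \<open>l\<close>
  passes through \<open>p\<close>.\<close>

lemma tree_decomposition_leaf_private:
  assumes td: "tree_decomposition V E I F X" and "l \<in> I" "j \<in> I" "j \<noteq> l"
    and leaf: "\<forall>x. {x, l} \<in> F \<longrightarrow> x = p"
  shows "X j \<inter> (X l - X p) = {}"
proof (rule ccontr)
  assume "X j \<inter> (X l - X p) \<noteq> {}"
  then obtain v where v: "v \<in> X j" "v \<in> X l" "v \<notin> X p" by auto
  let ?S = "{i\<in>I. v \<in> X i}"
  have "v \<in> V" using td v(2) \<open>l \<in> I\<close> unfolding tree_decomposition_def by auto
  then have "connected_graph ?S (induced_edges F ?S)"
    using td unfolding tree_decomposition_def by blast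
  then obtain q where q: "is_walk ?S (induced_edges F ?S) q" "hd q = l" "last q = j"
    using assms(2,3) v(1,2) unfolding connected_graph_def by blast
  then have "{l, q ! 1} \<in> F" "{l, q ! 1} \<subseteq> ?S"
    using is_walk_first_edge[OF q(1)] \<open>j \<noteq> l\<close> unfolding induced_edges_def by auto
  moreover from this have "q ! 1 = p" using leaf by (simp add: insert_commute)
  ultimately show False using v(3) by auto
qed

lemma tree_decomposition_remove_leaf:
  assumes td: "tree_decomposition V E I F X" and "l \<in> I" "{l, p} \<in> F"
    and leaf: "\<forall>x. {x, l} \<in> F \<longrightarrow> x = p"
  defines "D \<equiv> X l - X p"
  shows "tree_decomposition (V - D) {e\<in>E. e \<inter> D = {}} (I - {l}) {e\<in>F. l \<notin> e} X"
proof -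
  have tree: "is_tree I F" and tdX: "\<forall>i\<in>I. X i \<subseteq> V" and tdV: "\<forall>v\<in>V. \<exists>i\<in>I. v \<in> X i"
    and tdE: "\<forall>e\<in>E. \<exists>i\<in>I. e \<subseteq> X i"
    and tdC: "\<forall>v\<in>V. connected_graph {i\<in>I. v \<in> X i} (induced_edges F {i\<in>I. v \<in> X i})"
    using td unfolding tree_decomposition_def by blast+
  have outside_leaf: "X j \<inter> D = {}" if "j \<in> I" "j \<noteq> l" for j
    using tree_decomposition_leaf_private[OF td \<open>l \<in> I\<close> that leaf] unfolding D_def .
  have pI: "p \<in> I" and "p \<noteq> l"
    using tree assms(3) unfolding is_tree_def simple_graph_def by auto
  have conn: "connected_graph {i\<in>I - {l}. v \<in> X i} (induced_edges {e\<in>F. l \<notin> e} {i\<in>I - {l}. v \<in> X i})"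
    if "v \<in> V" for v
  proof -
    let ?S = "{i\<in>I. v \<in> X i}"
    have "connected_graph ?S (induced_edges F ?S)" using tdC that by blast
    moreover have "\<forall>x. {x, l} \<in> induced_edges F ?S \<longrightarrow> x = p"
      using leaf unfolding induced_edges_def by auto
    ultimately have "connected_graph (?S - {l}) {e \<in> induced_edges F ?S. l \<notin> e}"
      by (rule connected_graph_remove_pendant)
    moreover have "{i\<in>I - {l}. v \<in> X i} = ?S - {l}"
      "induced_edges {e\<in>F. l \<notin> e} (?S - {l}) = {e \<in> induced_edges F ?S. l \<notin> e}"
      unfolding induced_edges_def by auto
    ultimately show ?thesis by simp
  qed
  show ?thesis
    unfolding tree_decomposition_def
  proof (intro conjI ballI)
    show "is_tree (I - {l}) {e\<in>F. l \<notin> e}" by (rule is_tree_remove_leaf[OF tree assms(2,3) leaf])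
    show "X i \<subseteq> V - D" if "i \<in> I - {l}" for i using tdX outside_leaf that by blast
    show "\<exists>i\<in>I - {l}. v \<in> X i" if v: "v \<in> V - D" for v
    proof -
      obtain i where "i \<in> I" "v \<in> X i" using tdV v by blast
      then show ?thesis using v pI \<open>p \<noteq> l\<close> unfolding D_def by (cases "i = l") auto
    qed
    show "\<exists>i\<in>I - {l}. e \<subseteq> X i" if e: "e \<in> {e\<in>E. e \<inter> D = {}}" for e
    proof -
      obtain i where "i \<in> I" "e \<subseteq> X i" using tdE e by blast
      then show ?thesis using e pI \<open>p \<noteq> l\<close> unfolding D_def by (cases "i = l") auto
    qed
    show "connected_graph {i\<in>I - {l}. v \<in> X i} (induced_edges {e\<in>F. l \<notin> e} {i\<in>I - {l}. v \<in> X i})"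
      if "v \<in> V - D" for v using conn that by blast
  qed
qed

lemma card_edges_meeting_leaf_private_le:
  assumes td: "tree_decomposition V E I F X" and "simple_graph V E" "card (X l) \<le> w + 1" "l \<in> I"
    and leaf: "\<forall>x. {x, l} \<in> F \<longrightarrow> x = p"
  shows "card {e\<in>E. e \<inter> (X l - X p) \<noteq> {}} \<le> w * card (X l - X p)"
proof (rule card_edges_meeting_le)
  have "X l \<subseteq> V" using td \<open>l \<in> I\<close> unfolding tree_decomposition_def by blast
  then show "finite (X l)" using assms(2) finite_subset unfolding simple_graph_def by blast
  show "card (X l) \<le> w + 1" "X l - X p \<subseteq> X l" using assms(3) by auto
  show "\<forall>e\<in>{e\<in>E. e \<inter> (X l - X p) \<noteq> {}}. card e = 2 \<and> e \<subseteq> X l \<and> e \<inter> (X l - X p) \<noteq> {}"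
  proof
    fix e assume e: "e \<in> {e\<in>E. e \<inter> (X l - X p) \<noteq> {}}"
    then obtain j where j: "j \<in> I" "e \<subseteq> X j" using td unfolding tree_decomposition_def by blast
    have "j = l"
    proof (rule ccontr)
      assume "j \<noteq> l"
      then have "X j \<inter> (X l - X p) = {}"
        using tree_decomposition_leaf_private[OF td \<open>l \<in> I\<close> j(1) _ leaf] by blast
      then show False using e j(2) by blast
    qed
    then show "card e = 2 \<and> e \<subseteq> X l \<and> e \<inter> (X l - X p) \<noteq> {}"
      using e j assms(2) unfolding simple_graph_def by auto
  qed
qed

lemma card_edges_le_tree_decomposition:
  fixes I :: "'b set"
  assumes "tree_decomposition V E I F X" "simple_graph V E" "\<forall>i\<in>I. card (X i) \<le> w + 1"
  shows "card E \<le> w * card V"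
  using assms
proof (induction "card I" arbitrary: V E I F rule: less_induct)
  case less
  have tree: "is_tree I F" and tdX: "\<forall>i\<in>I. X i \<subseteq> V" and tdV: "\<forall>v\<in>V. \<exists>i\<in>I. v \<in> X i"
    and tdE: "\<forall>e\<in>E. \<exists>i\<in>I. e \<subseteq> X i"
    using less.prems(1) unfolding tree_decomposition_def by blast+
  have finV: "finite V" and Esub: "\<forall>e\<in>E. e \<subseteq> V \<and> card e = 2"
    using less.prems(2) by (auto simp: simple_graph_def)
  have finI: "finite I" using tree by (simp add: is_tree_def simple_graph_def)
  show ?case
  proof (cases "2 \<le> card I")
    case False
    moreover have "card I \<noteq> 0" using tree finI by (simp add: is_tree_def)
    ultimately have "card I = 1" by linarith
    then obtain i where I: "I = {i}" by (auto simp: card_Suc_eq)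
    have "V \<subseteq> X i" using tdV I by auto
    moreover have "\<forall>e\<in>E. card e = 2 \<and> e \<subseteq> X i \<and> e \<inter> V \<noteq> {}"
      using tdE I Esub by (fastforce simp: card_2_iff)
    moreover have "finite (X i)" using tdX I finV finite_subset by blast
    ultimately show ?thesis
      using card_edges_meeting_le[of "X i" w V E] less.prems(3) I by auto
  next
    case True
    obtain l p where leaf: "l \<in> I" "{l, p} \<in> F" "p \<noteq> l" "\<forall>x. {x, l} \<in> F \<longrightarrow> x = p"
      using tree_has_leaf[OF tree True] by blast
    define D where "D = X l - X p"
    have DV: "D \<subseteq> V" using tdX leaf(1) unfolding D_def by auto
    have "tree_decomposition (V - D) {e\<in>E. e \<inter> D = {}} (I - {l}) {e\<in>F. l \<notin> e} X"
      unfolding D_def by (rule tree_decomposition_remove_leaf[OF less.prems(1) leaf(1,2,4)])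
    moreover have "simple_graph (V - D) {e\<in>E. e \<inter> D = {}}"
      using less.prems(2) unfolding simple_graph_def by auto
    moreover have "card (I - {l}) < card I" by (rule card_Diff1_less[OF finI leaf(1)])
    ultimately have "card {e\<in>E. e \<inter> D = {}} \<le> w * card (V - D)"
      using less.hyps[of "I - {l}" "V - D" "{e\<in>E. e \<inter> D = {}}" "{e\<in>F. l \<notin> e}"] less.prems(3)
      by blast
    moreover have "card {e\<in>E. e \<inter> D \<noteq> {}} \<le> w * card D"
      unfolding D_def using less.prems(3) leaf(1)
      by (intro card_edges_meeting_leaf_private_le[OF less.prems(1,2) _ leaf(1,4)]) blast
    moreover have "card E \<le> card {e\<in>E. e \<inter> D = {}} + card {e\<in>E. e \<inter> D \<noteq> {}}"
    proof -
      have "card E = card ({e\<in>E. e \<inter> D = {}} \<union> {e\<in>E. e \<inter> D \<noteq> {}})"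
        by (rule arg_cong[where f = card]) blast
      also have "\<dots> \<le> card {e\<in>E. e \<inter> D = {}} + card {e\<in>E. e \<inter> D \<noteq> {}}"
        by (rule card_Un_le)
      finally show ?thesis .
    qed
    moreover have "card V = card (V - D) + card D"
      using DV finV by (metis card_Diff_subset card_mono finite_subset le_add_diff_inverse2)
    ultimately show ?thesis by (simp add: add_mult_distrib2)
  qed
qed

lemma tree_decomposition_single_bag:
  assumes "simple_graph V E"
  shows "tree_decomposition V E {0::nat} {} (\<lambda>_. V)"
proof -
  have "is_walk {0::nat} {} [0]" by (simp add: is_walk_def)
  then have conn: "connected_graph {0::nat} {}" by (auto simp: connected_graph_def)
  then have "is_tree {0::nat} {}" by (simp add: is_tree_def simple_graph_def)
  moreover have "{i\<in>{0::nat}. v \<in> V} = {0}" if "v \<in> V" for v using that by auto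
  ultimately show ?thesis
    using assms conn unfolding tree_decomposition_def induced_edges_def simple_graph_def by auto
qed

lemma card_edges_le_treewidth:
  assumes "simple_graph V E"
  shows "card E \<le> treewidth V E * card V"
proof -
  let ?has_width = "\<lambda>w. \<exists>(I::nat set) F X. tree_decomposition V E I F X \<and> td_width I X = w"
  have "?has_width (td_width {0::nat} (\<lambda>_. V))" using tree_decomposition_single_bag[OF assms] by blast
  then have "?has_width (treewidth V E)" unfolding treewidth_def by (rule LeastI)
  then obtain I :: "nat set" and F X
    where td: "tree_decomposition V E I F X" and width: "td_width I X = treewidth V E"
    by blast
  have "finite I" using td by (simp add: tree_decomposition_def is_tree_def simple_graph_def)
  then have "card (X i) \<le> treewidth V E + 1" if "i \<in> I" for i
  proof -
    have "card (X i) \<le> Max ((\<lambda>i. card (X i)) ` I)" using \<open>finite I\<close> that by simp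
    then show ?thesis using width unfolding td_width_def by linarith
  qed
  then show ?thesis using card_edges_le_tree_decomposition[OF td assms] by blast
qed

subsection \<open>Neighbourhood diversity\<close>

lemma neighborhood_diversity_le_card_partition:
  "nd_partition V E P \<Longrightarrow> neighborhood_diversity V E \<le> card P"
  unfolding neighborhood_diversity_def by (intro Least_le) blast

lemma neighborhood_diversity_le_card:
  assumes "finite V"
  shows "neighborhood_diversity V E \<le> card V"
proof -
  have "nd_partition V E ((\<lambda>v. {v}) ` V)" unfolding nd_partition_def by auto
  then have "neighborhood_diversity V E \<le> card ((\<lambda>v. {v}) ` V)"
    by (rule neighborhood_diversity_le_card_partition)
  also have "\<dots> \<le> card V" using assms by (rule card_image_le)
  finally show ?thesis .
qed

text \<open>Outside \<open>S\<close>, vertices with the same \<open>G\<close>-neighbourhood are twins in the complement, and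
  there are at most \<open>2\<^bsup>|S|\<^esup>\<close> possible neighbourhoods inside \<open>S\<close>.\<close>

lemma neighborhood_diversity_complement_le:
  assumes "finite V" "S \<subseteq> V" "\<forall>u\<in>V - S. neighbors E u \<subseteq> S"
  shows "neighborhood_diversity V (complement_edges V E) \<le> card S + 2 ^ card S"
proof -
  have finS: "finite S" using assms(1,2) finite_subset by blast
  define cls where "cls v = {u\<in>V - S. neighbors E u = neighbors E v}" for v
  define P where "P = (\<lambda>v. {v}) ` S \<union> cls ` (V - S)"
  have "nd_partition V (complement_edges V E) P"
    unfolding nd_partition_def
  proof (intro conjI ballI impI)
    show "C \<noteq> {}" if "C \<in> P" for C using that unfolding P_def cls_def by auto
    show "\<Union> P = V" unfolding P_def cls_def using assms(2) by auto
    show "C \<inter> D = {}" if "C \<in> P" "D \<in> P" "C \<noteq> D" for C D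
      using that unfolding P_def cls_def by auto
    fix C v v' assume "C \<in> P" "v \<in> C" "v' \<in> C"
    show "neighbors (complement_edges V E) v - {v'} = neighbors (complement_edges V E) v' - {v}"
    proof (cases "v = v'")
      case False
      then obtain u where "C = cls u" using \<open>C \<in> P\<close> \<open>v \<in> C\<close> \<open>v' \<in> C\<close> unfolding P_def by auto
      then have "v \<in> V" "v' \<in> V" "neighbors E v = neighbors E v'"
        using \<open>v \<in> C\<close> \<open>v' \<in> C\<close> unfolding cls_def by auto
      then show ?thesis using neighbors_complement_edges[of _ V E] by auto
    qed simp
  qed
  then have "neighborhood_diversity V (complement_edges V E) \<le> card P"
    by (rule neighborhood_diversity_le_card_partition)
  also have "\<dots> \<le> card ((\<lambda>v. {v}) ` S) + card (cls ` (V - S))" unfolding P_def by (rule card_Un_le)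
  also have "\<dots> \<le> card S + 2 ^ card S"
  proof (rule add_mono)
    show "card ((\<lambda>v. {v}) ` S) \<le> card S" by (rule card_image_le[OF finS])
    have "cls ` (V - S) = (\<lambda>T. {u\<in>V - S. neighbors E u = T}) ` (neighbors E ` (V - S))"
      unfolding cls_def by auto
    also have "card \<dots> \<le> card (neighbors E ` (V - S))" using assms(1) by (intro card_image_le) auto
    also have "\<dots> \<le> card (Pow S)" using finS assms(3) by (intro card_mono) auto
    also have "\<dots> = 2 ^ card S" using finS by (simp add: card_Pow)
    finally show "card (cls ` (V - S)) \<le> 2 ^ card S" .
  qed
  finally show ?thesis .
qed

subsection \<open>Vertices of small degree in the complement\<close>

definition low_codegree_vertices :: "'a set \<Rightarrow> 'a set set \<Rightarrow> 'a set" where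
  "low_codegree_vertices V E = {v\<in>V. 2 * degree (complement_edges V E) v < card V}"

text \<open>Each such vertex has \<open>G\<close>-degree at least \<open>(n - 1)/2\<close>, so there are few of them
  in a sparse graph.\<close>

lemma card_low_codegree_vertices_le:
  assumes "simple_graph V E" "card E \<le> w * card V" "4 * w + 2 \<le> card V"
  shows "card (low_codegree_vertices V E) \<le> 4 * w"
proof (rule ccontr)
  let ?S = "low_codegree_vertices V E" and ?n = "card V"
  assume many: "\<not> card ?S \<le> 4 * w"
  have finV: "finite V" and Esub: "\<forall>e\<in>E. e \<subseteq> V \<and> card e = 2"
    using assms(1) by (auto simp: simple_graph_def)
  have SV: "?S \<subseteq> V" unfolding low_codegree_vertices_def by auto
  have high_degree: "?n - 1 \<le> 2 * degree E v" if "v \<in> ?S" for v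
  proof -
    have "v \<in> V" "2 * degree (complement_edges V E) v < ?n"
      using that unfolding low_codegree_vertices_def by auto
    moreover have "?n - 1 \<le> degree E v + degree (complement_edges V E) v"
      using degree_add_degree_complement_ge[OF assms(1) \<open>v \<in> V\<close>] .
    ultimately show ?thesis by linarith
  qed
  have "(4 * w + 1) * (?n - 1) \<le> card ?S * (?n - 1)"
    using many by (intro mult_right_mono) auto
  also have "\<dots> = (\<Sum>v\<in>?S. ?n - 1)" by simp
  also have "\<dots> \<le> (\<Sum>v\<in>?S. 2 * degree E v)" using high_degree by (intro sum_mono)
  also have "\<dots> \<le> (\<Sum>v\<in>V. 2 * degree E v)" using SV finV by (intro sum_mono2) auto
  also have "\<dots> = 4 * card E"
    using sum_degree_eq_twice_card_edges[OF finV simple_graph_finite_edges[OF assms(1)] Esub]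
    by (simp add: sum_distrib_left[symmetric])
  also have "\<dots> \<le> 4 * w * ?n" using assms(2) by simp
  finally have "(4 * w + 1) * (?n - 1) \<le> 4 * w * ?n" .
  then show False using assms(3) by (cases ?n) (auto simp: algebra_simps)
qed

lemma neighbors_subset_low_codegree_vertices:
  assumes "\<forall>u\<in>V. \<forall>v\<in>V. u \<noteq> v \<longrightarrow> {u, v} \<notin> complement_edges V E \<longrightarrow>
           degree (complement_edges V E) u + degree (complement_edges V E) v < card V"
    and "simple_graph V E" "u \<in> V - low_codegree_vertices V E"
  shows "neighbors E u \<subseteq> low_codegree_vertices V E"
proof
  fix x assume "x \<in> neighbors E u"
  then have "{x, u} \<in> E" "x \<noteq> u" unfolding neighbors_def by auto
  moreover from this have "x \<in> V" using assms(2) unfolding simple_graph_def by blast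
  ultimately have "degree (complement_edges V E) x + degree (complement_edges V E) u < card V"
    using assms(1,3) doubleton_in_complement_edges_iff[of u V x E] by blast
  then show "x \<in> low_codegree_vertices V E"
    using assms(3) \<open>x \<in> V\<close> unfolding low_codegree_vertices_def by auto
qed

theorem theorem2:
  fixes V :: "'a set" and E :: "'a set set" and n w :: nat
  assumes "simple_graph V E"
    and "card V = n"
    and "treewidth V E = w"
    and "\<forall>u\<in>V. \<forall>v\<in>V. u \<noteq> v \<longrightarrow> {u, v} \<notin> complement_edges V E \<longrightarrow>
           degree (complement_edges V E) u + degree (complement_edges V E) v < n"
  shows "neighborhood_diversity V (complement_edges V E) \<le> 2 ^ (2 * (w^2 + w)) + 2 * (w^2 + w)"
proof -
  define k where "k = 2 * (w^2 + w)"
  define S where "S = low_codegree_vertices V E"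
  have finV: "finite V" using assms(1) by (simp add: simple_graph_def)
  have "4 * w \<le> k" unfolding k_def by (simp add: power2_eq_square le_square)
  show ?thesis
  proof (cases "n \<le> 2 ^ k + k")
    case True
    then show ?thesis
      using neighborhood_diversity_le_card[OF finV, of "complement_edges V E"] assms(2)
      unfolding k_def by linarith
  next
    case False
    with \<open>4 * w \<le> k\<close> less_exp[of k] have "4 * w + 2 \<le> card V" using assms(2) by linarith
    moreover have "card E \<le> w * card V" using card_edges_le_treewidth[OF assms(1)] assms(3) by simp
    ultimately have "card S \<le> 4 * w"
      unfolding S_def by (intro card_low_codegree_vertices_le[OF assms(1)])
    moreover have "\<forall>u\<in>V - S. neighbors E u \<subseteq> S"
      using neighbors_subset_low_codegree_vertices[OF assms(4)[folded assms(2)] assms(1)]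
      unfolding S_def by blast
    moreover have "S \<subseteq> V" unfolding S_def low_codegree_vertices_def by auto
    ultimately have "neighborhood_diversity V (complement_edges V E) \<le> card S + 2 ^ card S"
      using neighborhood_diversity_complement_le[OF finV] by blast
    also have "\<dots> \<le> k + 2 ^ k"
      using \<open>card S \<le> 4 * w\<close> \<open>4 * w \<le> k\<close> by (intro add_mono power_increasing) auto
    finally show ?thesis unfolding k_def by simp
  qed
qed

end
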